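(* Let $(M^n,g)$ be a Riemannian manifold, $T_1,\dots,T_m$ $(1,1)$-tensors on $M$, and $Q$ a $(0,3)$-tensor on $M$; for smooth $f$ let $\mathscr L[f]=\sum_{i=1}^m\mathrm{Hess}(f)(T_i\nabla f,T_i\nabla f)+Q(\nabla f,\nabla f,\nabla f)$. Let $\Omega\subset M$ be open and $u,v$ continuous functions on $\Omega$ such that for every $\epsilon>0$ and $x\in\Omega$ there exist smooth functions $u_{x,\epsilon},v_{x,\epsilon}$ on a neighborhood $U_{x,\epsilon}$ of $x$ and a constant $c_x>0$ independent of $\epsilon$ with: (1) $u\ge u_{x,\epsilon}$ on $U_{x,\epsilon}$ and $u(x)=u_{x,\epsilon}(x)$; (2) $\mathscr L[u_{x,\epsilon}](x)\ge-\epsilon$; (3) $v\le v_{x,\epsilon}$ on $U_{x,\epsilon}$ and $v(x)=v_{x,\epsilon}(x)$; (4) $\mathscr L[v_{x,\epsilon}](x)\le\epsilon$; (5) $\sum_{i=1}^m\langle T_i\nabla u_{x,\epsilon},\nabla u_{x,\epsilon}\rangle^2(x)+\sum_{i=1}^m\langle T_i\nabla v_{x,\epsilon},\nabla v_{x,\epsilon}\rangle^2(x)\ge c_x$; (6) $v:\Omega\to(\inf_\Omega v,\sup_\Omega v)$ is proper; (7) $M_v(u,t):=\max_{x\in S_v(t)}u(x)$ is increasing in $t\in(\inf_\Omega v,\sup_\Omega v)$, where $S_v(t)=\{x\in\Omega: v(x)=t\}$. Then $M_v(u,t)$ is a convex function of $t$ on $(\inf_\Omega v,\sup_\Omega v)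$.
   Context: $\nabla f$ is the gradient, $\mathrm{Hess}(f)=\nabla df$ the Levi-Civita Hessian of $g$, $\langle\cdot,\cdot\rangle=g$. "Increasing" means non-decreasing. *)

theory Defs
  imports "HOL-Analysis.Analysis"
begin

text \<open>Smooth manifolds via a smooth atlas; tensor fields via their components in
  the charts of the atlas, subject to the usual transformation laws.
  The manifold M is the whole type 'a, of dimension CARD('n).\<close>

type_synonym ('a, 'n) chart = "'a set \<times> ('a \<Rightarrow> real^'n)"

definition is_chart :: "('a::topological_space, 'n::finite) chart \<Rightarrow> bool" where
  "is_chart c \<longleftrightarrow> (case c of (U, \<phi>) \<Rightarrow>
     open U \<and> inj_on \<phi> U \<and> open (\<phi> ` U) \<and> continuous_on U \<phi> \<and>
     continuous_on (\<phi> ` U) (inv_into U \<phi>))"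

definition loc :: "('a, 'n) chart \<Rightarrow> ('a \<Rightarrow> 'b) \<Rightarrow> real^'n \<Rightarrow> 'b" where
  "loc c h = h \<circ> inv_into (fst c) (snd c)"

definition partial :: "'n::finite \<Rightarrow> (real^'n \<Rightarrow> real) \<Rightarrow> real^'n \<Rightarrow> real" where
  "partial i F y = deriv (\<lambda>t. F (y + t *\<^sub>R axis i 1)) 0"

text \<open>C-infinity on an (open) set: all iterated partial derivatives exist and are continuous.
  D js is the iterated partial derivative along the list of directions js.\<close>
definition smooth_fn_on :: "(real^'n::finite \<Rightarrow> real) \<Rightarrow> (real^'n) set \<Rightarrow> bool" where
  "smooth_fn_on F S \<longleftrightarrow> (\<exists>D :: 'n list \<Rightarrow> real^'n \<Rightarrow> real.
     D [] = F \<and> (\<forall>js. continuous_on S (D js)) \<and>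
     (\<forall>i js y. y \<in> S \<longrightarrow>
        ((\<lambda>t. D js (y + t *\<^sub>R axis i 1)) has_real_derivative D (i # js) y) (at 0)))"

definition transition :: "('a, 'n) chart \<Rightarrow> ('a, 'n) chart \<Rightarrow> real^'n \<Rightarrow> real^'n" where
  "transition c1 c2 = loc c1 (snd c2)"

definition smooth_atlas :: "('a::topological_space, 'n::finite) chart set \<Rightarrow> bool" where
  "smooth_atlas A \<longleftrightarrow> (\<forall>c\<in>A. is_chart c) \<and> (\<Union>c\<in>A. fst c) = UNIV \<and>
     (\<forall>c1\<in>A. \<forall>c2\<in>A. \<forall>k.
        smooth_fn_on (\<lambda>y. transition c1 c2 y $ k) (snd c1 ` (fst c1 \<inter> fst c2)))"

definition smooth_on_M :: "('a::topological_space, 'n::finite) chart set \<Rightarrow> ('a \<Rightarrow> real) \<Rightarrow> 'a set \<Rightarrow> bool" where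
  "smooth_on_M A f W \<longleftrightarrow> open W \<and> (\<forall>c\<in>A. smooth_fn_on (loc c f) (snd c ` (fst c \<inter> W)))"

definition jac :: "('a, 'n::finite) chart \<Rightarrow> ('a, 'n) chart \<Rightarrow> 'a \<Rightarrow> real^'n^'n" where
  "jac c1 c2 p = (\<chi> a i. partial i (\<lambda>y. transition c1 c2 y $ a) (snd c1 p))"

definition riemannian_metric :: "('a::topological_space, 'n::finite) chart set \<Rightarrow>
    (('a, 'n) chart \<Rightarrow> 'a \<Rightarrow> real^'n^'n) \<Rightarrow> bool" where
  "riemannian_metric A g \<longleftrightarrow>
     (\<forall>c\<in>A. \<forall>p\<in>fst c. transpose (g c p) = g c p \<and>
        (\<forall>w. w \<noteq> 0 \<longrightarrow> w \<bullet> (g c p *v w) > 0)) \<and>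
     (\<forall>c\<in>A. \<forall>i j. smooth_fn_on (\<lambda>y. loc c (g c) y $ i $ j) (snd c ` fst c)) \<and>
     (\<forall>c1\<in>A. \<forall>c2\<in>A. \<forall>p\<in>fst c1 \<inter> fst c2.
        g c1 p = transpose (jac c1 c2 p) ** g c2 p ** jac c1 c2 p)"

text \<open>(1,1)-tensor field: in each chart a smooth matrix (entry (k,j) = T^k_j).\<close>
definition tensor11 :: "('a::topological_space, 'n::finite) chart set \<Rightarrow>
    (('a, 'n) chart \<Rightarrow> 'a \<Rightarrow> real^'n^'n) \<Rightarrow> bool" where
  "tensor11 A T \<longleftrightarrow>
     (\<forall>c\<in>A. \<forall>i j. smooth_fn_on (\<lambda>y. loc c (T c) y $ i $ j) (snd c ` fst c)) \<and>
     (\<forall>c1\<in>A. \<forall>c2\<in>A. \<forall>p\<in>fst c1 \<inter> fst c2.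
        jac c1 c2 p ** T c1 p = T c2 p ** jac c1 c2 p)"

definition tensor03 :: "('a::topological_space, 'n::finite) chart set \<Rightarrow>
    (('a, 'n) chart \<Rightarrow> 'a \<Rightarrow> 'n \<Rightarrow> 'n \<Rightarrow> 'n \<Rightarrow> real) \<Rightarrow> bool" where
  "tensor03 A Q \<longleftrightarrow>
     (\<forall>c\<in>A. \<forall>i j k. smooth_fn_on (\<lambda>y. loc c (Q c) y i j k) (snd c ` fst c)) \<and>
     (\<forall>c1\<in>A. \<forall>c2\<in>A. \<forall>p\<in>fst c1 \<inter> fst c2. \<forall>i j k.
        Q c1 p i j k = (\<Sum>a\<in>UNIV. \<Sum>b\<in>UNIV. \<Sum>d\<in>UNIV.
           jac c1 c2 p $ a $ i * jac c1 c2 p $ b $ j * jac c1 c2 p $ d $ k * Q c2 p a b d))"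

text \<open>A chart of the atlas around x (all quantities below are chart-independent).\<close>
definition chart_at :: "('a, 'n) chart set \<Rightarrow> 'a \<Rightarrow> ('a, 'n) chart" where
  "chart_at A x = (SOME c. c \<in> A \<and> x \<in> fst c)"

definition grad_c :: "('a, 'n::finite) chart \<Rightarrow> (('a, 'n) chart \<Rightarrow> 'a \<Rightarrow> real^'n^'n) \<Rightarrow>
    ('a \<Rightarrow> real) \<Rightarrow> 'a \<Rightarrow> real^'n" where
  "grad_c c g f x = matrix_inv (g c x) *v (\<chi> i. partial i (loc c f) (snd c x))"

definition christoffel :: "('a, 'n::finite) chart \<Rightarrow> (('a, 'n) chart \<Rightarrow> 'a \<Rightarrow> real^'n^'n) \<Rightarrow>
    'a \<Rightarrow> 'n \<Rightarrow> 'n \<Rightarrow> 'n \<Rightarrow> real" where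
  "christoffel c g x k i j = (1/2) * (\<Sum>l\<in>UNIV. matrix_inv (g c x) $ k $ l *
      (partial i (\<lambda>z. loc c (g c) z $ j $ l) (snd c x)
       + partial j (\<lambda>z. loc c (g c) z $ i $ l) (snd c x)
       - partial l (\<lambda>z. loc c (g c) z $ i $ j) (snd c x)))"

definition hess_c :: "('a, 'n::finite) chart \<Rightarrow> (('a, 'n) chart \<Rightarrow> 'a \<Rightarrow> real^'n^'n) \<Rightarrow>
    ('a \<Rightarrow> real) \<Rightarrow> 'a \<Rightarrow> 'n \<Rightarrow> 'n \<Rightarrow> real" where
  "hess_c c g f x i j = partial i (partial j (loc c f)) (snd c x)
     - (\<Sum>k\<in>UNIV. christoffel c g x k i j * partial k (loc c f) (snd c x))"

definition Lop :: "('a, 'n::finite) chart set \<Rightarrow> (('a, 'n) chart \<Rightarrow> 'a \<Rightarrow> real^'n^'n) \<Rightarrow>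
    (nat \<Rightarrow> ('a, 'n) chart \<Rightarrow> 'a \<Rightarrow> real^'n^'n) \<Rightarrow> nat \<Rightarrow>
    (('a, 'n) chart \<Rightarrow> 'a \<Rightarrow> 'n \<Rightarrow> 'n \<Rightarrow> 'n \<Rightarrow> real) \<Rightarrow> ('a \<Rightarrow> real) \<Rightarrow> 'a \<Rightarrow> real" where
  "Lop A g T m Q f x =
     (let c = chart_at A x; w = grad_c c g f x in
       (\<Sum>k\<in>{1..m}. let tw = T k c x *v w in
          \<Sum>i\<in>UNIV. \<Sum>j\<in>UNIV. hess_c c g f x i j * tw $ i * tw $ j)
       + (\<Sum>i\<in>UNIV. \<Sum>j\<in>UNIV. \<Sum>l\<in>UNIV. Q c x i j l * w $ i * w $ j * w $ l))"

definition Tgrad_sq :: "('a, 'n::finite) chart set \<Rightarrow> (('a, 'n) chart \<Rightarrow> 'a \<Rightarrow> real^'n^'n) \<Rightarrow>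
    (nat \<Rightarrow> ('a, 'n) chart \<Rightarrow> 'a \<Rightarrow> real^'n^'n) \<Rightarrow> nat \<Rightarrow> ('a \<Rightarrow> real) \<Rightarrow> 'a \<Rightarrow> real" where
  "Tgrad_sq A g T m f x =
     (let c = chart_at A x; w = grad_c c g f x in
       \<Sum>k\<in>{1..m}. ((T k c x *v w) \<bullet> (g c x *v w))\<^sup>2)"

definition vrange :: "'a set \<Rightarrow> ('a \<Rightarrow> real) \<Rightarrow> real set" where
  "vrange \<Omega> v = {t. (INF x\<in>\<Omega>. ereal (v x)) < ereal t \<and> ereal t < (SUP x\<in>\<Omega>. ereal (v x))}"

text \<open>M_v(u,t) = max of u over the level set S_v(t) (written as Sup; it is attained).\<close>
definition Mv :: "'a set \<Rightarrow> ('a \<Rightarrow> real) \<Rightarrow> ('a \<Rightarrow> real) \<Rightarrow> real \<Rightarrow> real" where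
  "Mv \<Omega> u v t = Sup (u ` {x\<in>\<Omega>. v x = t})"

end

theory Submission
  imports Defs
begin

(* If M(t) = M_v(u,t) were not convex, some M(t0) would lie strictly above the chord over
   [t1,t2], t1 < t0 < t2. As M is increasing, that chord has positive slope, so a concave
   parabola psi with psi' > 0 on (-inf,t2] fits under M(t0) while passing through M(t1) and
   M(t2). By properness u - psi(v) attains a positive maximum on {t1 <= v <= t2}, necessarily
   at a point x0 with t1 < v(x0) < t2. Since psi is increasing, u_x - psi(v_x) has a local
   maximum at x0 too, so in a chart grad u_x = psi' grad v_x and
   Hess u_x <= psi' Hess v_x + psi'' (dv_x)^2. Hence
   L[u_x] <= psi'^3 L[v_x] + psi'^2 psi'' sum_i <T_i grad v_x, grad v_x>^2, while the sum of
   squares for u_x is psi'^4 times that for v_x; with psi'' < 0 this contradicts (2), (4)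
   and (5) once epsilon is small enough. *)

section \<open>Calculus in coordinates\<close>

lemma DERIV_bounded_increment:
  fixes f f' :: "real \<Rightarrow> real"
  assumes der: "\<And>s. min 0 b \<le> s \<Longrightarrow> s \<le> max 0 b \<Longrightarrow> (f has_real_derivative f' s) (at s)"
    and bound: "\<And>s. min 0 b \<le> s \<Longrightarrow> s \<le> max 0 b \<Longrightarrow> \<bar>f' s\<bar> \<le> e"
  shows "\<bar>f b - f 0\<bar> \<le> e * \<bar>b\<bar>"
proof (cases b "0::real" rule: linorder_cases)
  case less
  then obtain z where z: "b < z" "z < 0" "f 0 - f b = (0 - b) * f' z"
    using MVT2[of b 0 f f'] der by fastforce
  have "\<bar>f' z\<bar> \<le> e" using bound z less by auto
  then show ?thesis using z less by (simp add: abs_mult mult.commute mult_right_mono abs_minus_commute)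
next
  case equal
  then show ?thesis by simp
next
  case greater
  then obtain z where z: "0 < z" "z < b" "f b - f 0 = (b - 0) * f' z"
    using MVT2[of 0 b f f'] der by fastforce
  have "\<bar>f' z\<bar> \<le> e" using bound z greater by auto
  then show ?thesis using z greater by (simp add: abs_mult mult.commute mult_right_mono)
qed

lemma local_max_derivatives:
  fixes h h1 :: "real \<Rightarrow> real"
  assumes \<rho>: "\<rho> > 0"
    and max: "\<And>t. \<bar>t\<bar> < \<rho> \<Longrightarrow> h t \<le> h 0"
    and d1: "\<And>t. \<bar>t\<bar> < \<rho> \<Longrightarrow> (h has_real_derivative h1 t) (at t)"
    and d2: "(h1 has_real_derivative h2) (at 0)"
  shows "h1 0 = 0" "h2 \<le> 0"
proof -
  show h10: "h1 0 = 0"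
    by (rule DERIV_local_max[OF d1[of 0] \<rho>]) (use \<rho> max in auto)
  show "h2 \<le> 0"
  proof (rule ccontr)
    assume "\<not> h2 \<le> 0"
    from DERIV_pos_inc_right[OF d2] this obtain \<delta> where
      \<delta>: "\<delta> > 0" "\<And>s. s > 0 \<Longrightarrow> s < \<delta> \<Longrightarrow> h1 0 < h1 (0 + s)" by force
    define s where "s = min \<delta> \<rho> / 2"
    have s: "0 < s" "s < \<delta>" "s < \<rho>" using \<delta> \<rho> by (auto simp: s_def)
    obtain z where z: "0 < z" "z < s" "h s - h 0 = (s - 0) * h1 z"
      using MVT2[of 0 s h h1] s d1 by force
    have "h1 z > 0" using \<delta>(2)[of z] z s h10 by simp
    then have "h s > h 0" using z by (simp add: algebra_simps)
    moreover have "h s \<le> h 0" using max s by simp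
    ultimately show False by simp
  qed
qed

lemma norm_le_componentwise:
  fixes x y :: "real^'n"
  assumes "\<And>j. \<bar>x$j\<bar> \<le> \<bar>y$j\<bar>"
  shows "norm x \<le> norm y"
  unfolding norm_vec_def by (rule L2_set_mono) (use assms in auto)

definition vec_restrict :: "real^'n \<Rightarrow> 'n set \<Rightarrow> real^'n" where
  "vec_restrict h S = (\<chi> i. if i \<in> S then h$i else 0)"

text \<open>Moving from y to y + h one coordinate at a time, each step is controlled by the
  mean value theorem on a segment inside the ball.\<close>

lemma increment_along_coordinates_bound:
  fixes f :: "real^'n::finite \<Rightarrow> real"
  assumes S: "finite S"
    and close: "\<And>z i. z \<in> ball y r \<Longrightarrow> \<bar>d i z - d i y\<bar> \<le> e"
    and ball: "ball y r \<subseteq> V"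
    and der: "\<And>i z. z \<in> V \<Longrightarrow> ((\<lambda>t. f (z + t *\<^sub>R axis i 1)) has_real_derivative d i z) (at 0)"
    and h: "norm h < r"
  shows "\<bar>f (y + vec_restrict h S) - f y - (\<Sum>i\<in>S. h$i * d i y)\<bar> \<le> e * (\<Sum>i\<in>S. \<bar>h$i\<bar>)"
  using S
proof (induction S rule: finite_induct)
  case empty
  have "vec_restrict h {} = 0" by (simp add: vec_restrict_def vec_eq_iff)
  then show ?case by simp
next
  case (insert i S)
  define z where "z = y + vec_restrict h S"
  have step: "y + vec_restrict h (insert i S) = z + h$i *\<^sub>R axis i 1"
    using insert(2) by (auto simp: z_def vec_restrict_def vec_eq_iff axis_def)
  define \<phi> where "\<phi> s = f (z + s *\<^sub>R axis i 1) - s * d i y" for s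
  have in_ball: "z + s *\<^sub>R axis i 1 \<in> ball y r" if "min 0 (h$i) \<le> s" "s \<le> max 0 (h$i)" for s
  proof -
    have "norm (z + s *\<^sub>R axis i 1 - y) \<le> norm h"
      by (rule norm_le_componentwise)
        (use that insert(2) in \<open>auto simp: z_def vec_restrict_def axis_def\<close>)
    then show ?thesis using h by (simp add: dist_norm norm_minus_commute)
  qed
  have "\<bar>\<phi> (h$i) - \<phi> 0\<bar> \<le> e * \<bar>h$i\<bar>"
  proof (rule DERIV_bounded_increment)
    fix s assume s: "min 0 (h$i) \<le> s" "s \<le> max 0 (h$i)"
    let ?p = "z + s *\<^sub>R axis i 1"
    have "((\<lambda>t. f (?p + t *\<^sub>R axis i 1)) has_real_derivative d i ?p) (at 0)"
      using der in_ball[OF s] ball by blast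
    moreover have "(\<lambda>t. f (?p + t *\<^sub>R axis i 1)) = (\<lambda>t. f (z + (t + s) *\<^sub>R axis i 1))"
      by (simp add: algebra_simps scaleR_add_left)
    ultimately have "((\<lambda>t. f (z + t *\<^sub>R axis i 1)) has_real_derivative d i ?p) (at (0 + s))"
      using DERIV_shift[of "\<lambda>t. f (z + t *\<^sub>R axis i 1)" "d i ?p" 0 s] by simp
    then show "(\<phi> has_real_derivative d i ?p - d i y) (at s)"
      unfolding \<phi>_def by (auto intro!: derivative_eq_intros)
    show "\<bar>d i ?p - d i y\<bar> \<le> e" using close in_ball[OF s] by blast
  qed
  then have "\<bar>f (z + h$i *\<^sub>R axis i 1) - f z - h$i * d i y\<bar> \<le> e * \<bar>h$i\<bar>"
    by (simp add: \<phi>_def)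
  with insert(3) show ?case
    unfolding step using insert(1,2) by (simp add: z_def[symmetric] algebra_simps)
qed

lemma has_derivative_if_continuous_partials:
  fixes f :: "real^'n::finite \<Rightarrow> real"
  assumes V: "open V" "y \<in> V"
    and cont: "\<And>i. continuous_on V (d i)"
    and der: "\<And>i z. z \<in> V \<Longrightarrow> ((\<lambda>t. f (z + t *\<^sub>R axis i 1)) has_real_derivative d i z) (at 0)"
  shows "(f has_derivative (\<lambda>h. \<Sum>i\<in>UNIV. h$i * d i y)) (at y)"
  unfolding has_derivative_at_alt
proof (intro conjI allI impI)
  show "bounded_linear (\<lambda>h::real^'n. \<Sum>i\<in>UNIV. h$i * d i y)"
    unfolding linear_conv_bounded_linear[symmetric]
    by (rule linearI) (simp_all add: algebra_simps sum.distrib sum_distrib_left)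
next
  fix e :: real assume e: "e > 0"
  define N where "N = real CARD('n)"
  have N: "N > 0" by (simp add: N_def)
  have "\<forall>\<^sub>F z in at y. \<forall>i. dist (d i z) (d i y) < e / N"
  proof (rule eventually_all_finite)
    fix i
    have "isCont (d i) y" using cont V continuous_on_eq_continuous_at by blast
    then show "\<forall>\<^sub>F z in at y. dist (d i z) (d i y) < e / N"
      using e N by (simp add: isCont_def tendsto_iff)
  qed
  then obtain \<rho>1 where \<rho>1: "\<rho>1 > 0"
    "\<And>z. z \<noteq> y \<Longrightarrow> dist z y < \<rho>1 \<Longrightarrow> \<forall>i. dist (d i z) (d i y) < e / N"
    unfolding eventually_at by auto
  obtain \<rho>2 where \<rho>2: "\<rho>2 > 0" "ball y \<rho>2 \<subseteq> V" using V openE by blast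
  define \<rho> where "\<rho> = min \<rho>1 \<rho>2"
  have close: "\<bar>d i z - d i y\<bar> \<le> e / N" if "z \<in> ball y \<rho>" for z i
    using \<rho>1(2)[of z] that e N
    by (cases "z = y") (auto simp: \<rho>_def dist_commute dist_real_def abs_minus_commute less_imp_le)
  show "\<exists>\<delta>>0. \<forall>y'. norm (y' - y) < \<delta> \<longrightarrow>
      norm (f y' - f y - (\<Sum>i\<in>UNIV. (y' - y) $ i * d i y)) \<le> e * norm (y' - y)"
  proof (intro exI conjI allI impI)
    show "\<rho> > 0" using \<rho>1 \<rho>2 by (simp add: \<rho>_def)
    fix y' assume h: "norm (y' - y) < \<rho>"
    have ball: "ball y \<rho> \<subseteq> V" using \<rho>2 by (auto simp: \<rho>_def)
    have "vec_restrict (y' - y) UNIV = y' - y" by (simp add: vec_restrict_def vec_eq_iff)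
    then have "\<bar>f y' - f y - (\<Sum>i\<in>UNIV. (y' - y)$i * d i y)\<bar> \<le> e / N * (\<Sum>i\<in>UNIV. \<bar>(y' - y)$i\<bar>)"
      using increment_along_coordinates_bound[where S=UNIV, OF _ close ball der h] by simp
    also have "\<dots> \<le> e / N * (\<Sum>i\<in>(UNIV::'n set). norm (y' - y))"
      using e N by (intro mult_left_mono sum_mono component_le_norm_cart) auto
    also have "\<dots> = e * norm (y' - y)" using N by (simp add: N_def)
    finally show "norm (f y' - f y - (\<Sum>i\<in>UNIV. (y' - y) $ i * d i y)) \<le> e * norm (y' - y)"
      by simp
  qed
qed

lemma has_real_derivative_along_line:
  fixes f :: "real^'n::finite \<Rightarrow> real"
  assumes "(f has_derivative (\<lambda>h. \<Sum>i\<in>UNIV. h$i * d i)) (at (y + t *\<^sub>R w))"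
  shows "((\<lambda>s. f (y + s *\<^sub>R w)) has_real_derivative (\<Sum>i\<in>UNIV. w$i * d i)) (at t)"
proof -
  have "((\<lambda>s. y + s *\<^sub>R w) has_derivative (\<lambda>s. s *\<^sub>R w)) (at t)"
    by (auto intro!: derivative_eq_intros)
  from diff_chain_at[OF this assms]
  have "((\<lambda>s. f (y + s *\<^sub>R w)) has_derivative (\<lambda>s. \<Sum>i\<in>UNIV. (s *\<^sub>R w)$i * d i)) (at t)"
    by (simp add: o_def)
  moreover have "(\<lambda>s. \<Sum>i\<in>UNIV. (s *\<^sub>R w)$i * d i) = (*) (\<Sum>i\<in>UNIV. w$i * d i)"
    by (auto simp: fun_eq_iff sum_distrib_left algebra_simps)
  ultimately show ?thesis unfolding has_field_derivative_def by simp
qed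

lemma smooth_fn_on_imp_continuous_on: "smooth_fn_on F S \<Longrightarrow> continuous_on S F"
  unfolding smooth_fn_on_def by metis

lemma smooth_fn_on_subset:
  assumes "smooth_fn_on F S" "S' \<subseteq> S"
  shows "smooth_fn_on F S'"
proof -
  obtain D where "D [] = F" "\<forall>js. continuous_on S (D js)"
    "\<forall>i js y. y \<in> S \<longrightarrow> ((\<lambda>t. D js (y + t *\<^sub>R axis i 1)) has_real_derivative D (i # js) y) (at 0)"
    using assms(1) unfolding smooth_fn_on_def by blast
  then show ?thesis unfolding smooth_fn_on_def using assms(2)
    by (intro exI[of _ D]) (auto intro: continuous_on_subset)
qed

lemma smooth_fn_on_derivatives:
  fixes F :: "real^'n::finite \<Rightarrow> real"
  assumes V: "open V" and smooth: "smooth_fn_on F V"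
  obtains D where "D [] = F"
    "\<And>js y. y \<in> V \<Longrightarrow> (D js has_derivative (\<lambda>h. \<Sum>i\<in>UNIV. h$i * D (i # js) y)) (at y)"
    "\<And>i y. y \<in> V \<Longrightarrow> partial i F y = D [i] y"
    "\<And>i j y. y \<in> V \<Longrightarrow> partial i (partial j F) y = D [i, j] y"
proof -
  from smooth obtain D where D0: "D [] = F" and Dc: "\<And>js. continuous_on V (D js)"
    and Dd: "\<And>i js y. y \<in> V \<Longrightarrow>
      ((\<lambda>t. D js (y + t *\<^sub>R axis i 1)) has_real_derivative D (i # js) y) (at 0)"
    unfolding smooth_fn_on_def by blast
  have D1: "partial i F y = D [i] y" if "y \<in> V" for i y
    unfolding partial_def using Dd[OF that, where i=i and js="[]"] D0 by (simp add: DERIV_imp_deriv)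
  have D2: "partial i (partial j F) y = D [i, j] y" if y: "y \<in> V" for i j y
  proof -
    define S where "S = (\<lambda>t. y + t *\<^sub>R axis i (1::real)) -` V"
    have "open S" unfolding S_def
      by (rule open_vimage[OF V]) (auto intro!: continuous_intros)
    moreover have "0 \<in> S" using y by (simp add: S_def)
    moreover have "D [j] (y + t *\<^sub>R axis i 1) = partial j F (y + t *\<^sub>R axis i 1)" if "t \<in> S" for t
      using D1 that by (simp add: S_def)
    ultimately have "((\<lambda>t. partial j F (y + t *\<^sub>R axis i 1)) has_real_derivative D [i, j] y) (at 0)"
      by (rule has_field_derivative_transform_within_open[OF Dd[OF y, where i=i and js="[j]"]])
    then show ?thesis unfolding partial_def[of i "partial j F"] by (simp add: DERIV_imp_deriv)
  qed
  show ?thesis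
    by (rule that[OF D0 _ D1 D2]) (rule has_derivative_if_continuous_partials[OF V _ Dc Dd])
qed

lemma smooth_fn_on_directional_derivatives:
  fixes F :: "real^'n::finite \<Rightarrow> real"
  assumes V: "open V" "y0 \<in> V" and smooth: "smooth_fn_on F V"
  obtains \<rho> where "\<rho> > 0"
    "\<And>t. \<bar>t\<bar> < \<rho> \<Longrightarrow> y0 + t *\<^sub>R w \<in> V"
    "\<And>t. \<bar>t\<bar> < \<rho> \<Longrightarrow>
      ((\<lambda>s. F (y0 + s *\<^sub>R w)) has_real_derivative (\<Sum>i\<in>UNIV. w$i * partial i F (y0 + t *\<^sub>R w))) (at t)"
    "((\<lambda>t. \<Sum>i\<in>UNIV. w$i * partial i F (y0 + t *\<^sub>R w)) has_real_derivative
      (\<Sum>i\<in>UNIV. \<Sum>j\<in>UNIV. w$i * w$j * partial i (partial j F) y0)) (at 0)"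
proof -
  obtain D where D0: "D [] = F"
    and Dd: "\<And>js y. y \<in> V \<Longrightarrow> (D js has_derivative (\<lambda>h. \<Sum>i\<in>UNIV. h$i * D (i # js) y)) (at y)"
    and D1: "\<And>i y. y \<in> V \<Longrightarrow> partial i F y = D [i] y"
    and D2: "\<And>i j y. y \<in> V \<Longrightarrow> partial i (partial j F) y = D [i, j] y"
    using smooth_fn_on_derivatives[OF V(1) smooth] by blast
  obtain r where r: "r > 0" "ball y0 r \<subseteq> V" using V openE by blast
  define \<rho> where "\<rho> = r / (norm w + 1)"
  have \<rho>: "\<rho> > 0" using r by (simp add: \<rho>_def add_nonneg_pos)
  have line: "y0 + t *\<^sub>R w \<in> V" if t: "\<bar>t\<bar> < \<rho>" for t
  proof -
    have "\<bar>t\<bar> * norm w \<le> \<bar>t\<bar> * (norm w + 1)" by (simp add: mult_left_mono)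
    also have "\<dots> < r" using t by (simp add: \<rho>_def pos_less_divide_eq add_nonneg_pos)
    finally have "dist y0 (y0 + t *\<^sub>R w) < r" by (simp add: dist_norm)
    then show ?thesis using r by auto
  qed
  have LD: "((\<lambda>s. D js (y0 + s *\<^sub>R w)) has_real_derivative
      (\<Sum>i\<in>UNIV. w$i * D (i # js) (y0 + t *\<^sub>R w))) (at t)" if "\<bar>t\<bar> < \<rho>" for js t
    by (rule has_real_derivative_along_line[OF Dd[OF line[OF that]]])
  show ?thesis
  proof (rule that[OF \<rho> line])
    show "((\<lambda>s. F (y0 + s *\<^sub>R w)) has_real_derivative
        (\<Sum>i\<in>UNIV. w$i * partial i F (y0 + t *\<^sub>R w))) (at t)" if "\<bar>t\<bar> < \<rho>" for t
      using LD[OF that, of "[]"] D1[OF line[OF that]] D0 by simp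
    have "((\<lambda>t. \<Sum>i\<in>UNIV. w$i * D [i] (y0 + t *\<^sub>R w)) has_real_derivative
        (\<Sum>i\<in>UNIV. w$i * (\<Sum>j\<in>UNIV. w$j * D [j, i] y0))) (at 0)"
      using LD[of 0] \<rho> by (intro DERIV_sum DERIV_cmult) simp
    moreover have "(\<Sum>i\<in>UNIV. w$i * (\<Sum>j\<in>UNIV. w$j * D [j, i] y0))
        = (\<Sum>i\<in>UNIV. \<Sum>j\<in>UNIV. w$i * w$j * partial i (partial j F) y0)"
      using D2[OF V(2)] by (subst sum.swap) (simp add: sum_distrib_left mult.assoc mult.left_commute)
    ultimately have "((\<lambda>t. \<Sum>i\<in>UNIV. w$i * D [i] (y0 + t *\<^sub>R w)) has_real_derivative
        (\<Sum>i\<in>UNIV. \<Sum>j\<in>UNIV. w$i * w$j * partial i (partial j F) y0)) (at 0)"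
      by simp
    then show "((\<lambda>t. \<Sum>i\<in>UNIV. w$i * partial i F (y0 + t *\<^sub>R w)) has_real_derivative
        (\<Sum>i\<in>UNIV. \<Sum>j\<in>UNIV. w$i * w$j * partial i (partial j F) y0)) (at 0)"
    proof (rule has_field_derivative_transform_within_open)
      show "open {-\<rho><..<\<rho>}" "0 \<in> {-\<rho><..<\<rho>}" using \<rho> by auto
      fix t assume "t \<in> {-\<rho><..<\<rho>}"
      then have "y0 + t *\<^sub>R w \<in> V" using line by (simp add: abs_less_iff)
      then show "(\<Sum>i\<in>UNIV. w$i * D [i] (y0 + t *\<^sub>R w)) = (\<Sum>i\<in>UNIV. w$i * partial i F (y0 + t *\<^sub>R w))"
        using D1 by simp
    qed
  qed
qed

lemma local_max_sub_comp_partials: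
  fixes F G :: "real^'n::finite \<Rightarrow> real" and \<psi> \<psi>1 \<psi>2 :: "real \<Rightarrow> real"
  assumes V: "open V" "y0 \<in> V" and smF: "smooth_fn_on F V" and smG: "smooth_fn_on G V"
    and d\<psi>: "\<And>s. (\<psi> has_real_derivative \<psi>1 s) (at s)"
    and d\<psi>1: "\<And>s. (\<psi>1 has_real_derivative \<psi>2 s) (at s)"
    and max: "\<And>y. y \<in> V \<Longrightarrow> F y - \<psi> (G y) \<le> F y0 - \<psi> (G y0)"
  shows "(\<Sum>i\<in>UNIV. w$i * partial i F y0) = \<psi>1 (G y0) * (\<Sum>i\<in>UNIV. w$i * partial i G y0)"
    and "(\<Sum>i\<in>UNIV. \<Sum>j\<in>UNIV. w$i * w$j * partial i (partial j F) y0)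
      \<le> \<psi>1 (G y0) * (\<Sum>i\<in>UNIV. \<Sum>j\<in>UNIV. w$i * w$j * partial i (partial j G) y0)
        + \<psi>2 (G y0) * (\<Sum>i\<in>UNIV. w$i * partial i G y0)^2"
proof -
  define F1 where "F1 = (\<lambda>t. \<Sum>i\<in>UNIV. w$i * partial i F (y0 + t *\<^sub>R w))"
  define G1 where "G1 = (\<lambda>t. \<Sum>i\<in>UNIV. w$i * partial i G (y0 + t *\<^sub>R w))"
  define F2 where "F2 = (\<Sum>i\<in>UNIV. \<Sum>j\<in>UNIV. w$i * w$j * partial i (partial j F) y0)"
  define G2 where "G2 = (\<Sum>i\<in>UNIV. \<Sum>j\<in>UNIV. w$i * w$j * partial i (partial j G) y0)"
  obtain \<rho>F where \<rho>F: "\<rho>F > 0" "\<And>t. \<bar>t\<bar> < \<rho>F \<Longrightarrow> y0 + t *\<^sub>R w \<in> V"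
    "\<And>t. \<bar>t\<bar> < \<rho>F \<Longrightarrow> ((\<lambda>s. F (y0 + s *\<^sub>R w)) has_real_derivative F1 t) (at t)"
    "(F1 has_real_derivative F2) (at 0)"
    unfolding F1_def F2_def by (elim smooth_fn_on_directional_derivatives[OF V smF, of w])
  obtain \<rho>G where \<rho>G: "\<rho>G > 0" "\<And>t. \<bar>t\<bar> < \<rho>G \<Longrightarrow> y0 + t *\<^sub>R w \<in> V"
    "\<And>t. \<bar>t\<bar> < \<rho>G \<Longrightarrow> ((\<lambda>s. G (y0 + s *\<^sub>R w)) has_real_derivative G1 t) (at t)"
    "(G1 has_real_derivative G2) (at 0)"
    unfolding G1_def G2_def by (elim smooth_fn_on_directional_derivatives[OF V smG, of w])
  define \<rho> where "\<rho> = min \<rho>F \<rho>G"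
  have \<rho>: "\<rho> > 0" using \<rho>F \<rho>G by (simp add: \<rho>_def)
  define h where "h s = F (y0 + s *\<^sub>R w) - \<psi> (G (y0 + s *\<^sub>R w))" for s
  define h1 where "h1 t = F1 t - \<psi>1 (G (y0 + t *\<^sub>R w)) * G1 t" for t
  have "(h has_real_derivative h1 t) (at t)" if "\<bar>t\<bar> < \<rho>" for t
    unfolding h_def[abs_def] h1_def using that
    by (intro DERIV_diff DERIV_chain2[OF d\<psi>] \<rho>F(3) \<rho>G(3)) (auto simp: \<rho>_def)
  moreover have "h t \<le> h 0" if "\<bar>t\<bar> < \<rho>" for t
    using max[OF \<rho>F(2)] that by (simp add: h_def \<rho>_def)
  moreover have "(h1 has_real_derivative F2 - (\<psi>2 (G y0) * G1 0 * G1 0 + G2 * \<psi>1 (G y0))) (at 0)"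
  proof -
    have "((\<lambda>t. \<psi>1 (G (y0 + t *\<^sub>R w))) has_real_derivative \<psi>2 (G y0) * G1 0) (at 0)"
      using DERIV_chain2[OF d\<psi>1 \<rho>G(3)[of 0]] \<rho>G(1) by simp
    from DERIV_diff[OF \<rho>F(4) DERIV_mult[OF this \<rho>G(4)]] show ?thesis
      unfolding h1_def[abs_def] by simp
  qed
  ultimately have "h1 0 = 0" "F2 - (\<psi>2 (G y0) * G1 0 * G1 0 + G2 * \<psi>1 (G y0)) \<le> 0"
    using local_max_derivatives[OF \<rho>] by blast+
  then show "(\<Sum>i\<in>UNIV. w$i * partial i F y0) = \<psi>1 (G y0) * (\<Sum>i\<in>UNIV. w$i * partial i G y0)"
    and "F2 \<le> \<psi>1 (G y0) * G2 + \<psi>2 (G y0) * (\<Sum>i\<in>UNIV. w$i * partial i G y0)^2"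
    by (simp_all add: h1_def F1_def G1_def power2_eq_square algebra_simps)
qed

section \<open>The operator in a chart\<close>

lemma sum_axis_mult: "(\<Sum>j\<in>UNIV. axis i (1::real) $ j * X j) = X i"
proof -
  have "(\<Sum>j\<in>UNIV. axis i (1::real) $ j * X j) = (\<Sum>j\<in>UNIV. if j = i then X j else 0)"
    by (rule sum.cong) (auto simp: axis_def)
  then show ?thesis by simp
qed

lemma posdef_matrix_mul_inv:
  fixes B :: "real^'n::finite^'n"
  assumes "\<forall>w. w \<noteq> 0 \<longrightarrow> w \<bullet> (B *v w) > 0"
  shows "B *v (matrix_inv B *v d) = d"
proof -
  have "\<forall>x. B *v x = 0 \<longrightarrow> x = 0"
    using assms by (metis inner_zero_right less_irrefl)
  then have "invertible B"
    using matrix_left_invertible_ker invertible_left_inverse by blast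
  then have "B ** matrix_inv B = mat 1"
    unfolding invertible_def matrix_inv_def by (rule someI2_ex) auto
  then show ?thesis by (simp add: matrix_vector_mul_assoc)
qed

definition hess_form :: "('a, 'n::finite) chart \<Rightarrow> (('a, 'n) chart \<Rightarrow> 'a \<Rightarrow> real^'n^'n) \<Rightarrow>
    ('a \<Rightarrow> real) \<Rightarrow> 'a \<Rightarrow> real^'n \<Rightarrow> real" where
  "hess_form c g f x z = (\<Sum>i\<in>UNIV. \<Sum>j\<in>UNIV. hess_c c g f x i j * z $ i * z $ j)"

text \<open>Since the gradients are proportional, so are the Christoffel terms of the two
  Hessians; only the coordinate second derivatives need to be compared.\<close>

lemma hess_form_compare:
  assumes first: "\<And>i. partial i (loc c ux) (snd c x) = p * partial i (loc c vx) (snd c x)"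
    and second: "(\<Sum>i\<in>UNIV. \<Sum>j\<in>UNIV. z$i * z$j * partial i (partial j (loc c ux)) (snd c x))
      \<le> p * (\<Sum>i\<in>UNIV. \<Sum>j\<in>UNIV. z$i * z$j * partial i (partial j (loc c vx)) (snd c x))
        + q * (\<Sum>i\<in>UNIV. z$i * partial i (loc c vx) (snd c x))^2"
  shows "hess_form c g ux x z
    \<le> p * hess_form c g vx x z + q * (\<Sum>i\<in>UNIV. z$i * partial i (loc c vx) (snd c x))^2"
proof -
  define \<Gamma> where "\<Gamma> i j = (\<Sum>k\<in>UNIV. christoffel c g x k i j * partial k (loc c vx) (snd c x))" for i j
  define \<Gamma>z where "\<Gamma>z = (\<Sum>i\<in>UNIV. \<Sum>j\<in>UNIV. z$i * z$j * \<Gamma> i j)"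
  have hu: "hess_c c g ux x i j = partial i (partial j (loc c ux)) (snd c x) - p * \<Gamma> i j" for i j
    unfolding hess_c_def \<Gamma>_def using first by (simp add: sum_distrib_left algebra_simps)
  have hv: "hess_c c g vx x i j = partial i (partial j (loc c vx)) (snd c x) - \<Gamma> i j" for i j
    unfolding hess_c_def \<Gamma>_def by simp
  have u: "hess_form c g ux x z
      = (\<Sum>i\<in>UNIV. \<Sum>j\<in>UNIV. z$i * z$j * partial i (partial j (loc c ux)) (snd c x)) - p * \<Gamma>z"
    unfolding hess_form_def \<Gamma>z_def hu by (simp add: sum_distrib_left sum_subtractf algebra_simps)
  have v: "hess_form c g vx x z
      = (\<Sum>i\<in>UNIV. \<Sum>j\<in>UNIV. z$i * z$j * partial i (partial j (loc c vx)) (snd c x)) - \<Gamma>z"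
    unfolding hess_form_def \<Gamma>z_def hv by (simp add: sum_subtractf algebra_simps)
  show ?thesis using second unfolding u v by (simp add: right_diff_distrib)
qed

lemma Lop_Tgrad_sq_compare:
  fixes Q :: "('a, 'n::finite) chart \<Rightarrow> 'a \<Rightarrow> 'n \<Rightarrow> 'n \<Rightarrow> 'n \<Rightarrow> real"
  assumes c: "chart_at A x = c"
    and posdef: "\<forall>w. w \<noteq> 0 \<longrightarrow> w \<bullet> (g c x *v w) > 0"
    and first: "\<And>i. partial i (loc c ux) (snd c x) = p * partial i (loc c vx) (snd c x)"
    and second: "\<And>z. (\<Sum>i\<in>UNIV. \<Sum>j\<in>UNIV. z$i * z$j * partial i (partial j (loc c ux)) (snd c x))
      \<le> p * (\<Sum>i\<in>UNIV. \<Sum>j\<in>UNIV. z$i * z$j * partial i (partial j (loc c vx)) (snd c x))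
        + q * (\<Sum>i\<in>UNIV. z$i * partial i (loc c vx) (snd c x))^2"
  shows "Lop A g T m Q ux x \<le> p^3 * Lop A g T m Q vx x + p^2 * q * Tgrad_sq A g T m vx x"
    and "Tgrad_sq A g T m ux x = p^4 * Tgrad_sq A g T m vx x"
proof -
  define dv where "dv = (\<chi> i. partial i (loc c vx) (snd c x))"
  define wv where "wv = grad_c c g vx x"
  have grad_u: "grad_c c g ux x = p *\<^sub>R wv"
  proof -
    have "(\<chi> i. partial i (loc c ux) (snd c x)) = p *\<^sub>R dv"
      using first by (simp add: vec_eq_iff dv_def)
    then show ?thesis by (simp add: grad_c_def wv_def dv_def matrix_vector_mult_scaleR)
  qed
  have "g c x *v wv = dv"
    unfolding wv_def grad_c_def dv_def using posdef_matrix_mul_inv[OF posdef] by simp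
  then have metric_dv: "z \<bullet> (g c x *v wv) = (\<Sum>i\<in>UNIV. z$i * partial i (loc c vx) (snd c x))" for z
    unfolding dv_def inner_vec_def by simp
  define tz where "tz k = T k c x *v wv" for k
  define Qv where "Qv = (\<Sum>i\<in>UNIV. \<Sum>j\<in>UNIV. \<Sum>l\<in>UNIV. Q c x i j l * wv $ i * wv $ j * wv $ l)"
  have Lu: "Lop A g T m Q ux x = (\<Sum>k\<in>{1..m}. p^2 * hess_form c g ux x (tz k)) + p^3 * Qv"
    unfolding Lop_def Let_def c grad_u Qv_def tz_def matrix_vector_mult_scaleR
    by (simp add: hess_form_def sum_distrib_left power2_eq_square power3_eq_cube algebra_simps)
  have Lv: "Lop A g T m Q vx x = (\<Sum>k\<in>{1..m}. hess_form c g vx x (tz k)) + Qv"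
    unfolding Lop_def Let_def c Qv_def by (simp add: tz_def hess_form_def wv_def)
  have Tv: "Tgrad_sq A g T m vx x = (\<Sum>k\<in>{1..m}. (tz k \<bullet> (g c x *v wv))^2)"
    unfolding Tgrad_sq_def Let_def c by (simp add: tz_def wv_def)
  have "(\<Sum>k\<in>{1..m}. p^2 * hess_form c g ux x (tz k))
      \<le> (\<Sum>k\<in>{1..m}. p^2 * (p * hess_form c g vx x (tz k) + q * (tz k \<bullet> (g c x *v wv))^2))"
    unfolding metric_dv
    by (intro sum_mono mult_left_mono hess_form_compare[OF first second]) simp
  also have "\<dots> = p^3 * (\<Sum>k\<in>{1..m}. hess_form c g vx x (tz k))
      + p^2 * q * (\<Sum>k\<in>{1..m}. (tz k \<bullet> (g c x *v wv))^2)"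
    by (simp add: sum.distrib sum_distrib_left power3_eq_cube power2_eq_square algebra_simps)
  finally show "Lop A g T m Q ux x \<le> p^3 * Lop A g T m Q vx x + p^2 * q * Tgrad_sq A g T m vx x"
    unfolding Lu Lv Tv by (simp add: algebra_simps)
  show "Tgrad_sq A g T m ux x = p^4 * Tgrad_sq A g T m vx x"
    unfolding Tgrad_sq_def Let_def c grad_u
    by (simp add: matrix_vector_mult_scaleR sum_distrib_left wv_def power_mult_distrib
        flip: power2_eq_square)
qed

section \<open>Test functions on the manifold\<close>

lemma chart_at_in_atlas:
  assumes "smooth_atlas A"
  shows "chart_at A x \<in> A" "x \<in> fst (chart_at A x)"
proof -
  have "\<exists>c. c \<in> A \<and> x \<in> fst c" using assms unfolding smooth_atlas_def by blast
  then have "chart_at A x \<in> A \<and> x \<in> fst (chart_at A x)"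
    unfolding chart_at_def by (rule someI_ex)
  then show "chart_at A x \<in> A" "x \<in> fst (chart_at A x)" by auto
qed

lemma smooth_atlas_is_chart: "smooth_atlas A \<Longrightarrow> c \<in> A \<Longrightarrow> is_chart c"
  unfolding smooth_atlas_def by blast

lemma is_chartD:
  assumes "is_chart c"
  shows "open (fst c)" "inj_on (snd c) (fst c)" "continuous_on (fst c) (snd c)"
    "open (snd c ` fst c)" "continuous_on (snd c ` fst c) (inv_into (fst c) (snd c))"
  using assms by (auto simp: is_chart_def split_beta)

lemma chart_image_open:
  assumes "is_chart c" "open W" "W \<subseteq> fst c"
  shows "open (snd c ` W)"
proof -
  have "snd c ` W = inv_into (fst c) (snd c) -` W \<inter> snd c ` fst c"
    using is_chartD(2)[OF assms(1)] assms(3) by (auto simp: image_iff)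
  then show ?thesis
    using is_chartD(4,5)[OF assms(1)] assms(2) continuous_on_open_vimage by metis
qed

lemma smooth_on_M_subset:
  assumes "smooth_on_M A f U" "open W" "W \<subseteq> U"
  shows "smooth_on_M A f W"
proof -
  have "snd c ` (fst c \<inter> W) \<subseteq> snd c ` (fst c \<inter> U)" for c :: "('a, 'n) chart"
    using assms(3) by auto
  then show ?thesis using assms unfolding smooth_on_M_def by (blast intro: smooth_fn_on_subset)
qed

lemma smooth_on_M_imp_continuous_on:
  assumes atlas: "smooth_atlas A" and smooth: "smooth_on_M A f U"
  shows "continuous_on U f"
proof -
  have U_eq: "(\<Union>c\<in>A. fst c \<inter> U) = U" using atlas unfolding smooth_atlas_def by auto
  have "continuous_on (\<Union>c\<in>A. fst c \<inter> U) f"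
  proof (rule continuous_on_open_UN)
    fix c assume c: "c \<in> A"
    note chart = is_chartD[OF smooth_atlas_is_chart[OF atlas c]]
    show "open (fst c \<inter> U)" using chart(1) smooth unfolding smooth_on_M_def by auto
    have "continuous_on (fst c \<inter> U) (loc c f \<circ> snd c)"
      using smooth c continuous_on_subset[OF chart(3), of "fst c \<inter> U"]
      unfolding smooth_on_M_def by (intro continuous_on_compose) (auto dest: smooth_fn_on_imp_continuous_on)
    moreover have "(loc c f \<circ> snd c) x = f x" if "x \<in> fst c \<inter> U" for x
      using chart(2) that unfolding loc_def by simp
    ultimately show "continuous_on (fst c \<inter> U) f" by (rule continuous_on_eq)
  qed
  then show ?thesis unfolding U_eq .
qed

lemma local_max_sub_comp_Lop:
  fixes A :: "('a::topological_space, 'n::finite) chart set"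
    and \<psi> \<psi>1 \<psi>2 :: "real \<Rightarrow> real"
    and Q :: "('a, 'n) chart \<Rightarrow> 'a \<Rightarrow> 'n \<Rightarrow> 'n \<Rightarrow> 'n \<Rightarrow> real"
  assumes atlas: "smooth_atlas A" and metric: "riemannian_metric A g"
    and W: "open W" "x0 \<in> W"
    and smooth_u: "smooth_on_M A ux W" and smooth_v: "smooth_on_M A vx W"
    and d\<psi>: "\<And>s. (\<psi> has_real_derivative \<psi>1 s) (at s)"
    and d\<psi>1: "\<And>s. (\<psi>1 has_real_derivative \<psi>2 s) (at s)"
    and max: "\<And>y. y \<in> W \<Longrightarrow> ux y - \<psi> (vx y) \<le> ux x0 - \<psi> (vx x0)"
  shows "Lop A g T m Q ux x0 \<le> (\<psi>1 (vx x0))^3 * Lop A g T m Q vx x0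
           + (\<psi>1 (vx x0))^2 * \<psi>2 (vx x0) * Tgrad_sq A g T m vx x0"
    and "Tgrad_sq A g T m ux x0 = (\<psi>1 (vx x0))^4 * Tgrad_sq A g T m vx x0"
proof -
  define c where "c = chart_at A x0"
  have c: "c \<in> A" "x0 \<in> fst c" using chart_at_in_atlas[OF atlas] by (simp_all add: c_def)
  have "is_chart c" using smooth_atlas_is_chart[OF atlas c(1)] .
  note chart = is_chartD[OF this]
  define V where "V = snd c ` (fst c \<inter> W)"
  have "open V" unfolding V_def
    by (rule chart_image_open[OF \<open>is_chart c\<close>]) (use W chart(1) in auto)
  have y0: "snd c x0 \<in> V" using c W by (simp add: V_def)
  have loc_eq: "loc c f (snd c x) = f x" if "x \<in> fst c" for f x
    using chart(2) that by (simp add: loc_def)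
  have smooth_chart: "smooth_fn_on (loc c ux) V" "smooth_fn_on (loc c vx) V"
    using smooth_u smooth_v c(1) unfolding smooth_on_M_def V_def by auto
  have max_chart: "loc c ux y - \<psi> (loc c vx y) \<le> loc c ux (snd c x0) - \<psi> (loc c vx (snd c x0))"
    if "y \<in> V" for y
    using that max by (auto simp: V_def loc_eq c(2))
  have vx0: "loc c vx (snd c x0) = vx x0" using loc_eq[OF c(2)] .
  note chart_conditions = local_max_sub_comp_partials[OF \<open>open V\<close> y0 smooth_chart d\<psi> d\<psi>1]
  have second: "(\<Sum>i\<in>UNIV. \<Sum>j\<in>UNIV. w$i * w$j * partial i (partial j (loc c ux)) (snd c x0))
      \<le> \<psi>1 (vx x0) * (\<Sum>i\<in>UNIV. \<Sum>j\<in>UNIV. w$i * w$j * partial i (partial j (loc c vx)) (snd c x0))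
        + \<psi>2 (vx x0) * (\<Sum>i\<in>UNIV. w$i * partial i (loc c vx) (snd c x0))^2" for w
    using chart_conditions(2)[OF max_chart, of w] vx0 by simp
  have posdef: "\<forall>w. w \<noteq> 0 \<longrightarrow> w \<bullet> (g c x0 *v w) > 0"
    using metric c unfolding riemannian_metric_def by blast
  have first: "partial i (loc c ux) (snd c x0) = \<psi>1 (vx x0) * partial i (loc c vx) (snd c x0)" for i
    using chart_conditions(1)[OF max_chart, of "axis i 1"] vx0 by (simp add: sum_axis_mult)
  show "Lop A g T m Q ux x0 \<le> (\<psi>1 (vx x0))^3 * Lop A g T m Q vx x0
           + (\<psi>1 (vx x0))^2 * \<psi>2 (vx x0) * Tgrad_sq A g T m vx x0"
    and "Tgrad_sq A g T m ux x0 = (\<psi>1 (vx x0))^4 * Tgrad_sq A g T m vx x0"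
    using Lop_Tgrad_sq_compare[where g=g and ux=ux and vx=vx and p="\<psi>1 (vx x0)" and q="\<psi>2 (vx x0)",
        OF c_def[symmetric] posdef first second] by simp_all
qed

lemma test_functions_local_max:
  fixes u v ux vx :: "'a::topological_space \<Rightarrow> real" and \<psi> :: "real \<Rightarrow> real"
  assumes U: "open U" "x0 \<in> U" "U \<subseteq> \<Omega>"
    and cont: "continuous_on U v" "continuous_on U vx"
    and below: "\<forall>y\<in>U. ux y \<le> u y" "u x0 = ux x0"
    and above: "\<forall>y\<in>U. v y \<le> vx y" "v x0 = vx x0"
    and x0: "t1 < v x0" "v x0 < t2"
    and max: "\<And>x. x \<in> \<Omega> \<Longrightarrow> t1 \<le> v x \<Longrightarrow> v x \<le> t2 \<Longrightarrow> u x - \<psi> (v x) \<le> u x0 - \<psi> (v x0)"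
    and \<psi>_mono: "\<And>r s. r \<le> s \<Longrightarrow> s \<le> t2 \<Longrightarrow> \<psi> r \<le> \<psi> s"
  obtains W where "open W" "x0 \<in> W" "W \<subseteq> U"
    "\<And>y. y \<in> W \<Longrightarrow> ux y - \<psi> (vx y) \<le> ux x0 - \<psi> (vx x0)"
proof
  define W where "W = (v -` {t1<..<t2} \<inter> U) \<inter> (vx -` {..<t2} \<inter> U)"
  have "open (v -` {t1<..<t2} \<inter> U)" "open (vx -` {..<t2} \<inter> U)"
    using U(1) cont by (simp_all add: continuous_on_open_vimage)
  then show "open W" unfolding W_def by (rule open_Int)
  show "x0 \<in> W" using x0 U above by (simp add: W_def)
  show "W \<subseteq> U" by (auto simp: W_def)
  fix y assume "y \<in> W"
  then have "y \<in> U" "t1 < v y" "v y < t2" "vx y < t2" by (auto simp: W_def)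
  then have "ux y - \<psi> (vx y) \<le> u y - \<psi> (v y)"
    using below above \<psi>_mono[of "v y" "vx y"] by fastforce
  also have "\<dots> \<le> u x0 - \<psi> (v x0)" using max \<open>y \<in> U\<close> U(3) \<open>t1 < v y\<close> \<open>v y < t2\<close> by auto
  finally show "ux y - \<psi> (vx y) \<le> ux x0 - \<psi> (vx x0)" using below above by simp
qed

lemma comparison_inconsistent_for_small_eps:
  fixes p q c :: real
  assumes p: "p > 0" and q: "q < 0" and c: "c > 0"
  obtains \<epsilon> where "\<epsilon> > 0"
    "\<And>Lu Lv Su Sv. - \<epsilon> \<le> Lu \<Longrightarrow> Lv \<le> \<epsilon> \<Longrightarrow> Lu \<le> p^3 * Lv + p^2 * q * Sv \<Longrightarrow>
      Su = p^4 * Sv \<Longrightarrow> c \<le> Su + Sv \<Longrightarrow> False"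
proof
  define k where "k = - (p^2 * q)"
  have k: "k > 0" using p q by (simp add: k_def mult_pos_neg)
  have p34: "1 + p^3 > 0" "1 + p^4 > 0" using p by (auto intro: add_pos_pos)
  define P where "P = (1 + p^4) * (1 + p^3)"
  have P: "P > 0" using p34 by (simp add: P_def)
  define \<epsilon> where "\<epsilon> = k * c / 2 / P"
  show "\<epsilon> > 0" using k c P by (simp add: \<epsilon>_def)
  fix Lu Lv Su Sv
  assume Lu: "- \<epsilon> \<le> Lu" and Lv: "Lv \<le> \<epsilon>" and L: "Lu \<le> p^3 * Lv + p^2 * q * Sv"
    and S: "Su = p^4 * Sv" and Sc: "c \<le> Su + Sv"
  have "p^3 * Lv \<le> p^3 * \<epsilon>" using Lv p by (simp add: mult_left_mono)
  then have "k * Sv \<le> (1 + p^3) * \<epsilon>" using Lu L by (simp add: k_def algebra_simps)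
  moreover have "c \<le> (1 + p^4) * Sv" using Sc S by (simp add: algebra_simps)
  then have "k * c \<le> (1 + p^4) * (k * Sv)" using k by (simp add: mult_left_mono)
  ultimately have "k * c \<le> (1 + p^4) * ((1 + p^3) * \<epsilon>)"
    using p34 by (meson mult_left_mono less_imp_le order_trans)
  also have "\<dots> = P * \<epsilon>" by (simp add: P_def)
  also have "\<dots> = k * c / 2" using P by (simp add: \<epsilon>_def)
  finally show False using k c by simp
qed

lemma interior_max_contradicts_tests:
  fixes A :: "('a::topological_space, 'n::finite) chart set"
    and \<psi> \<psi>1 \<psi>2 :: "real \<Rightarrow> real"
  assumes atlas: "smooth_atlas A" and metric: "riemannian_metric A g"
    and v_cont: "continuous_on \<Omega> v"
    and x0: "t1 < v x0" "v x0 < t2"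
    and max: "\<And>x. x \<in> \<Omega> \<Longrightarrow> t1 \<le> v x \<Longrightarrow> v x \<le> t2 \<Longrightarrow> u x - \<psi> (v x) \<le> u x0 - \<psi> (v x0)"
    and d\<psi>: "\<And>s. (\<psi> has_real_derivative \<psi>1 s) (at s)"
    and d\<psi>1: "\<And>s. (\<psi>1 has_real_derivative \<psi>2 s) (at s)"
    and \<psi>1_pos: "\<And>s. s \<le> t2 \<Longrightarrow> \<psi>1 s > 0" and \<psi>2_neg: "\<psi>2 (v x0) < 0"
    and tests: "\<exists>c>0. \<forall>\<epsilon>>0. \<exists>U ux vx.
        open U \<and> x0 \<in> U \<and> U \<subseteq> \<Omega> \<and> smooth_on_M A ux U \<and> smooth_on_M A vx U \<and>
        (\<forall>y\<in>U. ux y \<le> u y) \<and> u x0 = ux x0 \<and>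
        Lop A g T m Q ux x0 \<ge> - \<epsilon> \<and>
        (\<forall>y\<in>U. v y \<le> vx y) \<and> v x0 = vx x0 \<and>
        Lop A g T m Q vx x0 \<le> \<epsilon> \<and>
        Tgrad_sq A g T m ux x0 + Tgrad_sq A g T m vx x0 \<ge> c" (is "\<exists>c>0. ?tests c")
  shows False
proof -
  obtain c where c: "c > 0" and tests_c: "?tests c" using tests by blast
  have p: "\<psi>1 (v x0) > 0" using \<psi>1_pos x0 by simp
  obtain \<epsilon> where "\<epsilon> > 0" and inconsistent: "\<And>Lu Lv Su Sv. - \<epsilon> \<le> Lu \<Longrightarrow> Lv \<le> \<epsilon> \<Longrightarrow>
      Lu \<le> (\<psi>1 (v x0))^3 * Lv + (\<psi>1 (v x0))^2 * \<psi>2 (v x0) * Sv \<Longrightarrow>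
      Su = (\<psi>1 (v x0))^4 * Sv \<Longrightarrow> c \<le> Su + Sv \<Longrightarrow> False"
    using comparison_inconsistent_for_small_eps[OF p \<psi>2_neg c] by blast
  then obtain U ux vx where U: "open U" "x0 \<in> U" "U \<subseteq> \<Omega>"
    and smooth: "smooth_on_M A ux U" "smooth_on_M A vx U"
    and below: "\<forall>y\<in>U. ux y \<le> u y" "u x0 = ux x0" and Lu: "Lop A g T m Q ux x0 \<ge> - \<epsilon>"
    and above: "\<forall>y\<in>U. v y \<le> vx y" "v x0 = vx x0" and Lv: "Lop A g T m Q vx x0 \<le> \<epsilon>"
    and S: "Tgrad_sq A g T m ux x0 + Tgrad_sq A g T m vx x0 \<ge> c"
    using tests_c[rule_format, OF \<open>\<epsilon> > 0\<close>] by (elim exE conjE) (rule that)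
  have \<psi>_mono: "\<psi> r \<le> \<psi> s" if "r \<le> s" "s \<le> t2" for r s
    using DERIV_nonneg_imp_nondecreasing[OF that(1)] d\<psi> \<psi>1_pos that
    by (meson less_imp_le order_trans)
  obtain W where W: "open W" "x0 \<in> W" "W \<subseteq> U"
    and W_max: "\<And>y. y \<in> W \<Longrightarrow> ux y - \<psi> (vx y) \<le> ux x0 - \<psi> (vx x0)"
    using test_functions_local_max[OF U continuous_on_subset[OF v_cont U(3)]
        smooth_on_M_imp_continuous_on[OF atlas smooth(2)] below above x0 max \<psi>_mono]
    by blast
  note comparison = local_max_sub_comp_Lop[OF atlas metric W(1,2)
      smooth_on_M_subset[OF smooth(1) W(1,3)] smooth_on_M_subset[OF smooth(2) W(1,3)]
      d\<psi> d\<psi>1 W_max, unfolded above(2)[symmetric]]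
  show False by (rule inconsistent[OF Lu Lv comparison S])
qed

section \<open>Maxima of u over level sets of v\<close>

lemma vrange_interval:
  assumes "a \<in> vrange \<Omega> v" "b \<in> vrange \<Omega> v" "a \<le> x" "x \<le> b"
  shows "x \<in> vrange \<Omega> v"
proof -
  have "(INF x\<in>\<Omega>. ereal (v x)) < ereal a" "ereal a \<le> ereal x"
    "ereal x \<le> ereal b" "ereal b < (SUP x\<in>\<Omega>. ereal (v x))"
    using assms by (simp_all add: vrange_def)
  then show ?thesis unfolding vrange_def mem_Collect_eq
    by (meson less_le_trans le_less_trans)
qed

lemma convex_vrange: "convex (vrange \<Omega> v)"
  unfolding is_interval_convex_1[symmetric] is_interval_1 using vrange_interval by blast

lemma Mv_upper:
  assumes "compact {x\<in>\<Omega>. v x = t}" "continuous_on \<Omega> u" "x \<in> \<Omega>" "v x = t"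
  shows "u x \<le> Mv \<Omega> u v t"
proof -
  have "compact (u ` {x\<in>\<Omega>. v x = t})"
    using assms(1,2) by (intro compact_continuous_image) (auto intro: continuous_on_subset)
  then show ?thesis unfolding Mv_def using assms(3,4)
    by (intro cSup_upper bounded_imp_bdd_above compact_imp_bounded) auto
qed

lemma Mv_attained:
  assumes "compact {x\<in>\<Omega>. v x = t}" "continuous_on \<Omega> u" "{x\<in>\<Omega>. v x = t} \<noteq> {}"
  obtains x where "x \<in> \<Omega>" "v x = t" "u x = Mv \<Omega> u v t"
proof -
  obtain x where x: "x \<in> {x\<in>\<Omega>. v x = t}" and max: "\<And>y. y \<in> {x\<in>\<Omega>. v x = t} \<Longrightarrow> u y \<le> u x"
    using continuous_attains_sup[OF assms(1,3) continuous_on_subset[OF assms(2)]] by blast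
  have "Mv \<Omega> u v t = u x" unfolding Mv_def using x max by (intro cSup_eq_maximum) auto
  with x show thesis by (intro that) auto
qed

lemma exists_max_between_levels:
  fixes u v \<psi> :: "_ \<Rightarrow> real"
  assumes K: "compact (\<Omega> \<inter> v -` {t1..t2})"
    and u: "continuous_on \<Omega> u" and v: "continuous_on \<Omega> v" and \<psi>: "continuous_on UNIV \<psi>"
    and ends: "\<And>x. x \<in> \<Omega> \<Longrightarrow> v x = t1 \<or> v x = t2 \<Longrightarrow> u x \<le> \<psi> (v x)"
    and y: "y \<in> \<Omega>" "t1 \<le> v y" "v y \<le> t2" "\<psi> (v y) < u y"
  obtains x0 where "x0 \<in> \<Omega>" "t1 < v x0" "v x0 < t2"
    "\<And>x. x \<in> \<Omega> \<Longrightarrow> t1 \<le> v x \<Longrightarrow> v x \<le> t2 \<Longrightarrow> u x - \<psi> (v x) \<le> u x0 - \<psi> (v x0)"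
proof -
  have "continuous_on (\<Omega> \<inter> v -` {t1..t2}) (\<lambda>x. u x - \<psi> (v x))"
    using continuous_on_subset[OF u] continuous_on_subset[OF v] \<psi>
    by (intro continuous_intros continuous_on_compose2[OF \<psi>]) auto
  moreover have "y \<in> \<Omega> \<inter> v -` {t1..t2}" using y by simp
  ultimately obtain x0 where x0: "x0 \<in> \<Omega> \<inter> v -` {t1..t2}"
    and x0_max: "\<And>x. x \<in> \<Omega> \<inter> v -` {t1..t2} \<Longrightarrow> u x - \<psi> (v x) \<le> u x0 - \<psi> (v x0)"
    using continuous_attains_sup[OF K] by blast
  have "\<not> u x0 \<le> \<psi> (v x0)" using x0_max[of y] y by simp
  then have "v x0 \<noteq> t1" "v x0 \<noteq> t2" using ends x0 by blast+
  then show thesis using x0 x0_max by (intro that) auto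
qed

text \<open>The chord from (t1, M1) to (t2, M2) has positive slope because M0 lies above it and
  M1 \<le> M0 \<le> M2; a small enough concave bump keeps the parabola increasing up to t2.\<close>

lemma concave_parabola_below:
  fixes t1 t0 t2 M1 M0 M2 :: real
  assumes t: "t1 < t0" "t0 < t2" and M: "M1 \<le> M0" "M0 \<le> M2"
    and above: "M1 * (t2 - t0) + M2 * (t0 - t1) < M0 * (t2 - t1)"
  obtains \<psi> \<psi>1 \<delta> where "\<And>s. (\<psi> has_real_derivative \<psi>1 s) (at s)"
    "\<And>s. (\<psi>1 has_real_derivative - 2 * \<delta>) (at s)" "\<delta> > 0"
    "\<psi> t1 = M1" "\<psi> t2 = M2" "\<psi> t0 < M0" "\<And>s. s \<le> t2 \<Longrightarrow> \<psi>1 s > 0"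
proof -
  define a where "a = (M2 - M1) / (t2 - t1)"
  define chord where "chord s = M1 + a * (s - t1)" for s
  have "chord t0 * (t2 - t1) = M1 * (t2 - t0) + M2 * (t0 - t1)"
    using t by (simp add: chord_def a_def field_simps)
  with above have "chord t0 * (t2 - t1) < M0 * (t2 - t1)" by simp
  then have gap: "chord t0 < M0" using t by (simp add: mult_less_cancel_right)
  have "M1 \<noteq> M2"
  proof
    assume "M1 = M2"
    then have "chord t0 = M0" using M by (simp add: chord_def a_def)
    then show False using gap by simp
  qed
  then have a: "a > 0" using M t by (simp add: a_def)
  define \<delta> where "\<delta> = min (a / (2 * (t2 - t1))) ((M0 - chord t0) / (2 * ((t0 - t1) * (t2 - t0))))"
  have \<delta>: "\<delta> > 0" using a gap t by (simp add: \<delta>_def)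
  show thesis
  proof (rule that[of "\<lambda>s. chord s + \<delta> * ((s - t1) * (t2 - s))" "\<lambda>s. a + \<delta> * (t1 + t2 - 2 * s)" \<delta>])
    show "((\<lambda>s. chord s + \<delta> * ((s - t1) * (t2 - s))) has_real_derivative a + \<delta> * (t1 + t2 - 2 * s)) (at s)"
      for s unfolding chord_def by (auto intro!: derivative_eq_intros simp: algebra_simps)
    show "((\<lambda>s. a + \<delta> * (t1 + t2 - 2 * s)) has_real_derivative - 2 * \<delta>) (at s)" for s
      by (auto intro!: derivative_eq_intros)
    show "chord t1 + \<delta> * ((t1 - t1) * (t2 - t1)) = M1" by (simp add: chord_def)
    show "chord t2 + \<delta> * ((t2 - t1) * (t2 - t2)) = M2" using t by (simp add: chord_def a_def)
    have "(t0 - t1) * (t2 - t0) > 0" using t by simp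
    moreover have "\<delta> \<le> (M0 - chord t0) / (2 * ((t0 - t1) * (t2 - t0)))" by (simp add: \<delta>_def)
    ultimately have "\<delta> * ((t0 - t1) * (t2 - t0)) \<le> (M0 - chord t0) / 2"
      by (simp add: pos_le_divide_eq mult.commute)
    then show "chord t0 + \<delta> * ((t0 - t1) * (t2 - t0)) < M0" using gap by simp
    show "a + \<delta> * (t1 + t2 - 2 * s) > 0" if "s \<le> t2" for s
    proof -
      have "\<delta> \<le> a / (2 * (t2 - t1))" by (simp add: \<delta>_def)
      then have "\<delta> * (t2 - t1) \<le> a / 2" using t by (simp add: pos_le_divide_eq algebra_simps)
      moreover have "\<delta> * (t1 - t2) \<le> \<delta> * (t1 + t2 - 2 * s)" using \<delta> that by (simp add: mult_left_mono)
      ultimately show ?thesis using a by (simp add: algebra_simps)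
    qed
  qed (rule \<delta>)
qed

lemma convex_on_three_pointI:
  fixes f :: "real \<Rightarrow> real"
  assumes "convex I"
    and three_point: "\<And>t1 t0 t2. t1 \<in> I \<Longrightarrow> t2 \<in> I \<Longrightarrow> t1 < t0 \<Longrightarrow> t0 < t2 \<Longrightarrow>
      f t0 * (t2 - t1) \<le> f t1 * (t2 - t0) + f t2 * (t0 - t1)"
  shows "convex_on I f"
proof (rule convex_on_linorderI[OF _ assms(1)])
  fix t x y :: real assume t: "0 < t" "t < 1" and xy: "x \<in> I" "y \<in> I" "x < y"
  define t0 where "t0 = (1 - t) * x + t * y"
  have "t0 - x = t * (y - x)" "y - t0 = (1 - t) * (y - x)" by (simp_all add: t0_def algebra_simps)
  then have "x < t0" "t0 < y" using t xy(3) by (metis diff_gt_0_iff_gt mult_pos_pos)+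
  then have "f t0 * (y - x) \<le> f x * (y - t0) + f y * (t0 - x)" using three_point xy by blast
  also have "\<dots> = ((1 - t) * f x + t * f y) * (y - x)" by (simp add: t0_def algebra_simps)
  finally show "f ((1 - t) *\<^sub>R x + t *\<^sub>R y) \<le> (1 - t) * f x + t * f y"
    using xy(3) by (simp add: t0_def)
qed

theorem theorem3p3:
  fixes A :: "('a::{t2_space, second_countable_topology}, 'n::finite) chart set"
    and g :: "('a, 'n) chart \<Rightarrow> 'a \<Rightarrow> real^'n^'n"
    and T :: "nat \<Rightarrow> ('a, 'n) chart \<Rightarrow> 'a \<Rightarrow> real^'n^'n"
    and m :: nat
    and Q :: "('a, 'n) chart \<Rightarrow> 'a \<Rightarrow> 'n \<Rightarrow> 'n \<Rightarrow> 'n \<Rightarrow> real"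
    and \<Omega> :: "'a set"
    and u v :: "'a \<Rightarrow> real"
  assumes atlas: "smooth_atlas A"
    and metric: "riemannian_metric A g"
    and tensT: "\<forall>k\<in>{1..m}. tensor11 A (T k)"
    and tensQ: "tensor03 A Q"
    and \<Omega>_open: "open \<Omega>"
    and u_cont: "continuous_on \<Omega> u"
    and v_cont: "continuous_on \<Omega> v"
    and tests: "\<forall>x\<in>\<Omega>. \<exists>c>0. \<forall>\<epsilon>>0. \<exists>U ux vx.
        open U \<and> x \<in> U \<and> U \<subseteq> \<Omega> \<and> smooth_on_M A ux U \<and> smooth_on_M A vx U \<and>
        (\<forall>y\<in>U. ux y \<le> u y) \<and> u x = ux x \<and>
        Lop A g T m Q ux x \<ge> - \<epsilon> \<and>
        (\<forall>y\<in>U. v y \<le> vx y) \<and> v x = vx x \<and>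
        Lop A g T m Q vx x \<le> \<epsilon> \<and>
        Tgrad_sq A g T m ux x + Tgrad_sq A g T m vx x \<ge> c"
    and v_into: "v ` \<Omega> \<subseteq> vrange \<Omega> v"
    and v_proper: "\<forall>K. compact K \<and> K \<subseteq> vrange \<Omega> v \<longrightarrow> compact (\<Omega> \<inter> v -` K)"
    and level_nonempty: "\<forall>t\<in>vrange \<Omega> v. {x\<in>\<Omega>. v x = t} \<noteq> {}"
    and Mv_mono: "mono_on (vrange \<Omega> v) (Mv \<Omega> u v)"
  shows "convex_on (vrange \<Omega> v) (Mv \<Omega> u v)"
proof (rule convex_on_three_pointI[OF convex_vrange])
  let ?M = "Mv \<Omega> u v"
  have level_compact: "compact {x\<in>\<Omega>. v x = t}" if "t \<in> vrange \<Omega> v" for t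
  proof -
    have "compact (\<Omega> \<inter> v -` {t})" using v_proper that by simp
    moreover have "\<Omega> \<inter> v -` {t} = {x\<in>\<Omega>. v x = t}" by auto
    ultimately show ?thesis by simp
  qed
  fix t1 t0 t2 assume t1: "t1 \<in> vrange \<Omega> v" and t2: "t2 \<in> vrange \<Omega> v" and t: "t1 < t0" "t0 < t2"
  have between: "{t1..t2} \<subseteq> vrange \<Omega> v" using vrange_interval[OF t1 t2] by auto
  then have t0: "t0 \<in> vrange \<Omega> v" using t by auto
  show "?M t0 * (t2 - t1) \<le> ?M t1 * (t2 - t0) + ?M t2 * (t0 - t1)"
  proof (rule ccontr)
    assume "\<not> ?thesis"
    then have above: "?M t1 * (t2 - t0) + ?M t2 * (t0 - t1) < ?M t0 * (t2 - t1)" by simp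
    have mono: "?M t1 \<le> ?M t0" "?M t0 \<le> ?M t2" using Mv_mono t1 t0 t2 t by (auto intro: mono_onD)
    obtain \<psi> \<psi>1 \<delta> where d\<psi>: "\<And>s. (\<psi> has_real_derivative \<psi>1 s) (at s)"
      and d\<psi>1: "\<And>s. (\<psi>1 has_real_derivative - 2 * \<delta>) (at s)" and "\<delta> > 0"
      and \<psi>_ends: "\<psi> t1 = ?M t1" "\<psi> t2 = ?M t2" and \<psi>_t0: "\<psi> t0 < ?M t0"
      and \<psi>1_pos: "\<And>s. s \<le> t2 \<Longrightarrow> \<psi>1 s > 0"
      by (elim concave_parabola_below[OF t mono above])
    obtain y where y: "y \<in> \<Omega>" "v y = t0" "u y = ?M t0"
      using Mv_attained[OF level_compact[OF t0] u_cont] level_nonempty t0 by blast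
    have "continuous_on UNIV \<psi>"
      using d\<psi> by (meson DERIV_isCont continuous_at_imp_continuous_on)
    moreover have "u x \<le> \<psi> (v x)" if "x \<in> \<Omega>" "v x = t1 \<or> v x = t2" for x
      using that Mv_upper[OF level_compact[OF t1] u_cont] Mv_upper[OF level_compact[OF t2] u_cont] \<psi>_ends
      by auto
    ultimately obtain x0 where x0: "x0 \<in> \<Omega>" "t1 < v x0" "v x0 < t2"
      and max: "\<And>x. x \<in> \<Omega> \<Longrightarrow> t1 \<le> v x \<Longrightarrow> v x \<le> t2 \<Longrightarrow> u x - \<psi> (v x) \<le> u x0 - \<psi> (v x0)"
      using exists_max_between_levels[of \<Omega> v t1 t2 u \<psi> y] v_proper between u_cont v_cont y t \<psi>_t0
      by auto
    show False
      using interior_max_contradicts_tests[OF atlas metric v_cont x0(2,3) max d\<psi> d\<psi>1 \<psi>1_pos _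
          bspec[OF tests x0(1)]] \<open>\<delta> > 0\<close> by simp
  qed
qed

end
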